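(* Let $h>1$, $q=2^h$, and let $U$ be a nonempty subset of $\mathrm{GF}(q)^{\star}$. Then every non-degenerate conic of $PG(2,q^2)$ has at least one point in the set $\Psi'=\{P(x,y):\|x\|\in U\}\cup\{Y_\infty\}$, where $Y_\infty$ is the point at infinity of the vertical lines $X=c$; equivalently, the set of lines $\{X=c: c\in\mathrm{GF}(q^2),\ \|c\|\in U\}$ of $PG(2,q^2)$ is a conic blocking set.
   Context: $\|x\|=x^{q+1}$ for $x\in\mathrm{GF}(q^2)$. A conic blocking set of $PG(2,q^2)$ is a set of lines such that every non-degenerate conic meets at least one line of the set. *)

theory Defs
  imports Main
begin

definition gnorm :: "nat \<Rightarrow> 'a::field \<Rightarrow> 'a" where
  "gnorm q x = x ^ (q + 1)"

text \<open>The subfield GF(q) of GF(q^2), i.e. fixed points of Frobenius x |-> x^q,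
  and its multiplicative group GF(q)^*.\<close>
definition subfield_star :: "nat \<Rightarrow> 'a::field set" where
  "subfield_star q = {u. u \<noteq> 0 \<and> u ^ q = u}"

type_synonym 'a conic = "'a \<times> 'a \<times> 'a \<times> 'a \<times> 'a \<times> 'a"

fun conic_form :: "'a::field conic \<Rightarrow> 'a \<times> 'a \<times> 'a \<Rightarrow> 'a" where
  "conic_form (a, b, c, d, e, f) (X, Y, Z) =
     a*X^2 + b*Y^2 + c*Z^2 + d*X*Y + e*X*Z + f*Y*Z"

text \<open>Non-degeneracy: the (half-)discriminant
  4abc + def - af^2 - be^2 - cd^2 is nonzero (valid in every characteristic;
  in characteristic 2 it is af^2 + be^2 + cd^2 + def).\<close>
fun conic_nondeg :: "'a::field conic \<Rightarrow> bool" where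
  "conic_nondeg (a, b, c, d, e, f) =
     (4*a*b*c + d*e*f - a*f^2 - b*e^2 - c*d^2 \<noteq> 0)"

text \<open>Points of PG(2,F) are nonzero triples up to scalars; a point lies on a conic
  iff any (every) representative is a zero of the form.\<close>
definition on_conic :: "'a::field conic \<Rightarrow> 'a \<times> 'a \<times> 'a \<Rightarrow> bool" where
  "on_conic C p \<longleftrightarrow> p \<noteq> (0, 0, 0) \<and> conic_form C p = 0"

text \<open>Psi' = {P(x,y) : ||x|| in U} union {Y_infinity}, with P(x,y) = (x:y:1) and
  Y_infinity = (0:1:0), as representatives.\<close>
definition Psi' :: "nat \<Rightarrow> 'a::field set \<Rightarrow> ('a \<times> 'a \<times> 'a) set" where
  "Psi' q U = {(x, y, 1) | x y. gnorm q x \<in> U} \<union> {(0, 1, 0)}"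

end

theory Submission
  imports Defs "HOL-Number_Theory.Residues" "HOL-Computational_Algebra.Polynomial"
begin

text \<open>
  Let F = GF(q^2) with q = 2^h, and let u be in GF(q)^*.  A conic
  a X^2 + b Y^2 + c Z^2 + d XY + e XZ + f YZ with b = 0 contains Y_infinity = (0:1:0).
  Otherwise, after scaling, we look for a point (x : y : 1) whose x-coordinate lies on the
  norm circle x^(q+1) = u and solves the quadratic y^2 + (dx+f) y + (a x^2 + e x + c) = 0.
  In characteristic 2 this quadratic is solvable iff dx + f = 0 or (a x^2+e x+c)/(dx+f)^2
  lies in the image of the Artin-Schreier map z |-> z^2 + z; modulo that image the quotient
  is a nondegenerate Moebius function of x (lemmas conic_to_mobius_vertical and
  conic_to_mobius_general).  The heart of the proof is a counting argument
  (mobius_meets_artin_schreier): the norm circle has q + 1 points,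
  while a Moebius function avoiding the Artin-Schreier image would have its relative traces
  w + w^q in a set of at most q/2 elements, each value taken at most twice.
\<close>

lemma card_eq_sum_fibres:
  assumes "finite X"
  shows "card X = (\<Sum>v\<in>f ` X. card {x\<in>X. f x = v})"
proof -
  have "card X = card (\<Union>v\<in>f ` X. {x\<in>X. f x = v})"
    by (rule arg_cong[where f = card]) auto
  also have "\<dots> = (\<Sum>v\<in>f ` X. card {x\<in>X. f x = v})"
    using assms by (intro card_UN_disjoint) auto
  finally show ?thesis .
qed

lemma card_le_mult_card_image:
  assumes "finite X" and "\<And>v. v \<in> f ` X \<Longrightarrow> card {x\<in>X. f x = v} \<le> k"
  shows "card X \<le> k * card (f ` X)"
proof -
  have "card X = (\<Sum>v\<in>f ` X. card {x\<in>X. f x = v})"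
    using assms(1) by (rule card_eq_sum_fibres)
  also have "\<dots> \<le> (\<Sum>v\<in>f ` X. k)"
    using assms(2) by (intro sum_mono)
  finally show ?thesis by (simp add: mult.commute)
qed

lemma card_roots_trinomial:
  fixes a b :: "'a::field"
  assumes "n \<ge> 2"
  shows "card {x. x ^ n + a * x = b} \<le> n"
proof -
  let ?p = "monom 1 n + [:-b, a:]"
  have "degree [:-b, a:] < degree (monom (1::'a) n)"
    using assms by (simp add: degree_monom_eq)
  hence deg: "degree ?p = n"
    using assms by (simp add: degree_add_eq_left degree_monom_eq)
  hence "card {x. poly ?p x = 0} \<le> n"
    using assms card_poly_roots_bound[of ?p] by fastforce
  moreover have "{x. poly ?p x = 0} = {x. x ^ n + a * x = b}"
    by (auto simp: poly_monom algebra_simps)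
  ultimately show ?thesis by simp
qed

lemma card_roots_quadratic:
  fixes A B C :: "'a::field"
  assumes "A \<noteq> 0 \<or> B \<noteq> 0 \<or> C \<noteq> 0"
  shows "card {x. A * x^2 + B * x + C = 0} \<le> 2"
proof -
  let ?p = "[:C, B, A:]"
  have "?p \<noteq> 0" and "degree ?p \<le> 2"
    using assms by auto
  hence "card {x. poly ?p x = 0} \<le> 2"
    using card_poly_roots_bound[of ?p] by linarith
  moreover have "{x. poly ?p x = 0} = {x. A * x^2 + B * x + C = 0}"
    by (auto simp: algebra_simps power2_eq_square)
  ultimately show ?thesis by simp
qed

text \<open>Fermat's little theorem for an arbitrary finite field: x^|F| = x.  (The library
  version is stated for the type class finite_field, which the type here is not declared to be.)\<close>
lemma finite_field_power_card:
  fixes x :: "'a::{field,finite}"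
  shows "x ^ card (UNIV :: 'a set) = x"
proof (cases "x = 0")
  case True
  thus ?thesis by (simp add: finite_UNIV_card_ge_0)
next
  case False
  let ?U = "UNIV - {0::'a}"
  have "inj_on ((*) x) ?U"
    using False by (auto simp: inj_on_def)
  moreover have "(*) x ` ?U = ?U"
  proof
    show "(*) x ` ?U \<subseteq> ?U"
      using False by auto
    show "?U \<subseteq> (*) x ` ?U"
    proof
      fix y assume "y \<in> ?U"
      hence "y = x * (y / x)" and "y / x \<in> ?U" using False by auto
      thus "y \<in> (*) x ` ?U" by blast
    qed
  qed
  ultimately have "\<Prod>?U = (\<Prod>y\<in>?U. x * y)"
    by (metis (no_types, lifting) prod.reindex_cong)
  also have "\<dots> = x ^ card ?U * \<Prod>?U"
    by (simp add: prod.distrib)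
  finally have "x ^ card ?U = 1"
    by (metis (no_types, lifting) Diff_iff finite mult_cancel_right1 prod_zero_iff singletonI)
  moreover have "card ?U + 1 = card (UNIV :: 'a set)"
    by (simp add: card_Diff_singleton finite_UNIV_card_ge_0 Suc_leI)
  ultimately show ?thesis by (metis power_add power_one_right mult_1)
qed

lemma CHAR_eq_two:
  assumes "card (UNIV :: 'a::{field,finite} set) = 2 ^ n"
  shows "CHAR('a) = 2"
proof -
  have prime: "prime CHAR('a)"
    by (simp add: finite_imp_CHAR_pos prime_CHAR_semidom)
  moreover have "CHAR('a) dvd 2 ^ n"
    using CHAR_dvd_CARD[where 'a = 'a] assms by simp
  ultimately have "CHAR('a) dvd 2"
    using prime_dvd_power by blast
  thus ?thesis
    using prime primes_dvd_imp_eq two_is_prime_nat by blast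
qed

text \<open>The Artin-Schreier map z |-> z^2 + z: in characteristic 2, y^2 + B y + C = 0 with B
  nonzero is solvable iff C/B^2 lies in its image.\<close>
definition artin_schreier :: "'a::field \<Rightarrow> 'a" where
  "artin_schreier z = z^2 + z"

definition mobius :: "'a::field \<Rightarrow> 'a \<Rightarrow> 'a \<Rightarrow> 'a \<Rightarrow> 'a \<Rightarrow> 'a" where
  "mobius \<alpha> \<beta> \<gamma> \<delta> x = (\<alpha>*x + \<beta>) / (\<gamma>*x + \<delta>)"

lemma inj_on_mobius:
  assumes "\<alpha>*\<delta> - \<beta>*\<gamma> \<noteq> 0" and "\<And>x. x \<in> A \<Longrightarrow> \<gamma>*x + \<delta> \<noteq> 0"
  shows "inj_on (mobius \<alpha> \<beta> \<gamma> \<delta>) A"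
proof (rule inj_onI)
  fix x y assume x: "x \<in> A" and y: "y \<in> A" and eq: "mobius \<alpha> \<beta> \<gamma> \<delta> x = mobius \<alpha> \<beta> \<gamma> \<delta> y"
  have "(\<alpha>*\<delta> - \<beta>*\<gamma>) * (x - y) = (\<alpha>*x+\<beta>) * (\<gamma>*y+\<delta>) - (\<alpha>*y+\<beta>) * (\<gamma>*x+\<delta>)"
    by (simp add: algebra_simps)
  also have "\<dots> = 0"
    using eq assms(2)[OF x] assms(2)[OF y] by (simp add: mobius_def field_simps)
  finally show "x = y"
    using assms(1) by simp
qed

lemma sum_of_fractions_eq_iff:
  fixes a b c d1 d2 :: "'a::field"
  assumes "d1 \<noteq> 0" and "d2 \<noteq> 0"
  shows "a/d1 + b/d2 = c \<longleftrightarrow> a*d2 + b*d1 - c*d1*d2 = 0"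
proof -
  have "a/d1 + b/d2 - c = (a*d2 + b*d1 - c*d1*d2) / (d1*d2)"
    using assms by (simp add: field_simps)
  thus ?thesis using assms by (metis divide_eq_0_iff eq_iff_diff_eq_0 mult_eq_0_iff)
qed

lemma divide_square_artin_schreier:
  fixes B C L T :: "'a::field"
  assumes "B \<noteq> 0" and "C = L*B + T^2 + T*B"
  shows "C / B^2 = L / B + artin_schreier (T / B)"
  using assms by (simp add: artin_schreier_def field_simps power2_eq_square)

context
  assumes char_two: "CHAR('a::{field,finite}) = 2"
begin

lemma two_eq_zero: "(2::'a) = 0"
  using of_nat_CHAR[where 'a = 'a] char_two by simp

lemma add_self_eq_zero: "(x::'a) + x = 0"
  by (metis mult_2 mult_zero_left two_eq_zero)

lemma minus_eq_self: "- (x::'a) = x"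
  by (metis add_eq_0_iff add_self_eq_zero)

lemma frobenius_additive: "((x::'a) + y) ^ (2^k) = x ^ (2^k) + y ^ (2^k)"
  by (rule freshmans_dream'[where n = k]) (simp_all add: char_two)

lemma square_add: "((x::'a) + y)^2 = x^2 + y^2"
  using frobenius_additive[of x y 1] by simp

text \<open>In a finite field of characteristic 2 every element is a square, since squaring is
  an injective additive map.\<close>
lemma exists_square_root: "\<exists>r::'a. r^2 = z"
proof -
  have "inj (\<lambda>y::'a. y^2)"
  proof (rule injI)
    fix y w :: 'a assume "y^2 = w^2"
    hence "(y + w)^2 = 0"
      by (simp add: square_add add_self_eq_zero)
    hence "y = - w" by (simp add: eq_neg_iff_add_eq_0)
    thus "y = w" by (simp add: minus_eq_self)
  qed
  hence "surj (\<lambda>y::'a. y^2)"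
    by (simp add: finite_UNIV_inj_surj)
  thus ?thesis by (metis surjD)
qed

lemma artin_schreier_add: "artin_schreier ((z::'a) + t) = artin_schreier z + artin_schreier t"
  by (simp add: artin_schreier_def square_add algebra_simps)

lemma artin_schreier_eq_iff: "artin_schreier (x::'a) = artin_schreier z \<longleftrightarrow> x = z \<or> x = z + 1"
proof -
  have "artin_schreier x - artin_schreier z = (x + z) * (x + z + 1)"
    by (simp add: artin_schreier_def power2_eq_square algebra_simps minus_eq_self two_eq_zero)
  moreover have "x + z = 0 \<longleftrightarrow> x = z" and "x + z + 1 = 0 \<longleftrightarrow> x = z + 1"
    by (metis add_diff_cancel_right' add_self_eq_zero add.assoc)+
  ultimately show ?thesis by auto
qed

lemma card_artin_schreier_image:
  assumes "finite (X::'a set)" and "\<And>z. z \<in> X \<Longrightarrow> z + 1 \<in> X"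
  shows "card X = 2 * card (artin_schreier ` X)"
proof -
  have "card {x\<in>X. artin_schreier x = v} = 2" if v: "v \<in> artin_schreier ` X" for v
  proof -
    obtain z where z: "z \<in> X" "v = artin_schreier z" using v by blast
    hence "{x\<in>X. artin_schreier x = v} = {z, z + 1}"
      using assms(2) by (auto simp: artin_schreier_eq_iff)
    thus ?thesis by simp
  qed
  hence "card X = (\<Sum>v\<in>artin_schreier ` X. 2)"
    using card_eq_sum_fibres[OF assms(1), of artin_schreier] by (metis (mono_tags, lifting) sum.cong)
  thus ?thesis by simp
qed

text \<open>Solvability of y^2 + B y + C = 0: if B is zero take a square root, otherwise
  substitute y = B z and use C/B^2 = z^2 + z.\<close>
lemma quadratic_solvable:
  fixes B C :: 'a
  assumes "B = 0 \<or> C / B^2 \<in> range artin_schreier"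
  shows "\<exists>y. y^2 + B*y + C = 0"
proof (cases "B = 0")
  case True
  obtain y where "y^2 = C" using exists_square_root by blast
  hence "y^2 + B*y + C = C + C" using True by simp
  thus ?thesis using add_self_eq_zero by metis
next
  case False
  then obtain z where z: "C / B^2 = artin_schreier z" using assms by auto
  have "C = B^2 * artin_schreier z"
    using z False by (simp add: field_simps)
  hence "(B*z)^2 + B*(B*z) + C = C + C"
    by (simp add: artin_schreier_def algebra_simps power2_eq_square)
  also have "\<dots> = 0" using add_self_eq_zero by simp
  finally show ?thesis by blast
qed

text \<open>Let a f^2 + e^2 + c d^2 + d e f be nonzero (the
  discriminant of y^2 + (dx+f) y + (a x^2 + e x + c) in characteristic 2).  For d = 0 the constants come from
  a square root r of a, and the Artin-Schreier correction is taken at r x/f.\<close>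
lemma conic_to_mobius_vertical:
  fixes a c d e f :: 'a
  assumes nd: "a*f^2 + e^2 + c*d^2 + d*e*f \<noteq> 0" and d: "d = 0" and f: "f \<noteq> 0"
  obtains \<alpha> \<beta> where "\<alpha>*f + \<beta>*d \<noteq> 0"
    and "\<And>x. d*x + f \<noteq> 0 \<Longrightarrow>
          \<exists>t. (a*x^2 + e*x + c) / (d*x + f)^2 = mobius \<alpha> \<beta> d f x + artin_schreier t"
proof -
  obtain r where r: "a = r^2" using exists_square_root by metis
  have "(r*f + e)^2 = a*f^2 + e^2"
    by (simp add: r square_add power_mult_distrib)
  moreover have "(r + e/f)*f + (c/f)*d = r*f + e"
    using d f by (simp add: field_simps)
  ultimately have "(r + e/f)*f + (c/f)*d \<noteq> 0"
    using nd d by auto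
  moreover have "\<exists>t. (a*x^2 + e*x + c) / (d*x + f)^2 = mobius (r + e/f) (c/f) d f x + artin_schreier t"
    for x
  proof -
    have "((r + e/f)*x + c/f)*f + (r*x)^2 + (r*x)*f = (a*x^2 + e*x + c) + 2*(r*x*f)"
      using f by (simp add: r field_simps power2_eq_square)
    hence "a*x^2 + e*x + c = ((r + e/f)*x + c/f)*f + (r*x)^2 + (r*x)*f"
      by (simp add: two_eq_zero)
    thus ?thesis
      using divide_square_artin_schreier[OF f] d by (auto simp: mobius_def)
  qed
  ultimately show ?thesis using that by blast
qed

text \<open>For d nonzero we use square roots r of a and s of c + e f/d, and the
  Artin-Schreier correction is taken at (s + r x)/(dx + f).\<close>
lemma conic_to_mobius_general:
  fixes a c d e f :: 'a
  assumes nd: "a*f^2 + e^2 + c*d^2 + d*e*f \<noteq> 0" and d: "d \<noteq> 0"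
  obtains \<alpha> \<beta> where "\<alpha>*f + \<beta>*d \<noteq> 0"
    and "\<And>x. d*x + f \<noteq> 0 \<Longrightarrow>
          \<exists>t. (a*x^2 + e*x + c) / (d*x + f)^2 = mobius \<alpha> \<beta> d f x + artin_schreier t"
proof -
  obtain r where r: "a = r^2" using exists_square_root by metis
  obtain s where s: "c = s^2 - e*f/d"
    using exists_square_root[of "c + e*f/d"] by (metis add_diff_cancel_right')
  have "(r*f + e + s*d)^2 = a*f^2 + e^2 + s^2*d^2"
    by (simp add: r square_add power_mult_distrib)
  also have "s^2*d^2 = c*d^2 + d*e*f"
    using d by (simp add: s field_simps power2_eq_square)
  finally have "(r*f + e + s*d)^2 = a*f^2 + e^2 + c*d^2 + d*e*f"
    by (simp add: add.assoc)
  moreover have "r*f + (e/d + s)*d = r*f + e + s*d"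
    using d by (simp add: field_simps)
  ultimately have "r*f + (e/d + s)*d \<noteq> 0"
    using nd by (metis add.assoc zero_power2)
  moreover have "\<exists>t. (a*x^2 + e*x + c) / (d*x + f)^2 = mobius r (e/d + s) d f x + artin_schreier t"
    if B: "d*x + f \<noteq> 0" for x
  proof -
    have "(r*x + (e/d + s))*(d*x + f) + (s + r*x)^2 + (s + r*x)*(d*x + f)
        = (a*x^2 + e*x + c) + 2*((r*x + s)*(d*x + f) + s*r*x + e*f/d)"
      using d by (simp add: r s field_simps power2_eq_square)
    hence "a*x^2 + e*x + c = (r*x + (e/d + s))*(d*x + f) + (s + r*x)^2 + (s + r*x)*(d*x + f)"
      by (simp add: two_eq_zero)
    thus ?thesis
      using divide_square_artin_schreier[OF B] by (auto simp: mobius_def)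
  qed
  ultimately show ?thesis using that by blast
qed

lemma conic_nondeg_char_two:
  fixes a b c d e f :: 'a
  assumes "conic_nondeg (a, b, c, d, e, f)"
  shows "a*f^2 + b*e^2 + c*d^2 + d*e*f \<noteq> 0"
proof -
  have "4*a*b*c + d*e*f - a*f^2 - b*e^2 - c*d^2
      = (a*f^2 + b*e^2 + c*d^2 + d*e*f) + 2*(2*a*b*c - a*f^2 - b*e^2 - c*d^2)"
    by (simp add: algebra_simps)
  also have "\<dots> = a*f^2 + b*e^2 + c*d^2 + d*e*f"
    by (simp add: two_eq_zero)
  finally show ?thesis
    using assms by (metis conic_nondeg.simps)
qed

text \<open>The field GF(q^2) with q = 2^h.  Its elements fixed by x |-> x^q form the
  subfield GF(q); for x in GF(q^2), x + x^q is the relative trace and x^(q+1) the norm.\<close>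

context
  fixes q h :: nat
  assumes card_UNIV: "card (UNIV :: 'a set) = q^2" and q_def: "q = 2^h"
begin

text \<open>Since a field has at least two elements, q is at least 2.\<close>
lemma q_ge_two: "q \<ge> 2"
proof -
  have "card {0, 1::'a} \<le> q^2"
    unfolding card_UNIV[symmetric] by (rule card_mono) auto
  hence "2 \<le> q^2" by simp
  moreover have "q^2 \<le> 1" if "q \<le> 1"
    using that power_mono[of q 1 2] by simp
  ultimately show ?thesis by linarith
qed

lemma frobenius_q: "((x::'a) + y)^q = x^q + y^q"
  unfolding q_def by (rule frobenius_additive)

lemma power_q_q: "((x::'a)^q)^q = x"
  using finite_field_power_card[of x] by (simp add: card_UNIV power2_eq_square flip: power_mult)

lemma artin_schreier_power_q: "(artin_schreier (x::'a))^q = artin_schreier (x^q)"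
  by (simp add: artin_schreier_def frobenius_q flip: power_mult) (simp add: mult.commute)

lemma card_fixed_le: "card {z::'a. z^q = z} \<le> q"
proof -
  have "{z::'a. z^q = z} = {z. z^q + (-1)*z = 0}" by auto
  thus ?thesis using card_roots_trinomial[OF q_ge_two] by metis
qed

lemma card_range_artin_schreier: "2 * card (range (artin_schreier :: 'a \<Rightarrow> 'a)) = q^2"
  using card_artin_schreier_image[of UNIV] card_UNIV by simp

lemma card_fixed_artin_schreier:
  "2 * card (artin_schreier ` {z::'a. z^q = z}) = card {z::'a. z^q = z}"
  using card_artin_schreier_image[of "{z::'a. z^q = z}"] by (simp add: frobenius_q)

lemma card_fixed_not_artin_schreier:
  "2 * card ({z::'a. z^q = z} - artin_schreier ` {z. z^q = z}) \<le> q"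
proof -
  let ?K = "{z::'a. z^q = z}"
  have "artin_schreier ` ?K \<subseteq> ?K"
    by (auto simp: artin_schreier_power_q)
  hence "card (?K - artin_schreier ` ?K) = card ?K - card (artin_schreier ` ?K)"
    by (simp add: card_Diff_subset)
  thus ?thesis
    using card_fixed_artin_schreier card_fixed_le by linarith
qed

text \<open>Lifting criterion: w lies in the Artin-Schreier image of GF(q^2) as soon as its
  relative trace w + w^q lies in the Artin-Schreier image of GF(q).  The converse inclusion
  is a direct computation, and the set of w satisfying the criterion is not larger than the
  image, since each trace value has at most q preimages.\<close>
lemma rel_trace_artin_schreier:
  assumes "(w::'a) + w^q \<in> artin_schreier ` {z. z^q = z}"
  shows "w \<in> range artin_schreier"
proof -
  let ?K = "{z::'a. z^q = z}"
  let ?A = "{w::'a. w + w^q \<in> artin_schreier ` ?K}"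
  have sub: "range artin_schreier \<subseteq> ?A"
  proof
    fix w assume "w \<in> range (artin_schreier :: 'a \<Rightarrow> 'a)"
    then obtain y where y: "w = artin_schreier y" by auto
    have "w + w^q = artin_schreier (y + y^q)"
      by (simp add: y artin_schreier_power_q artin_schreier_add)
    moreover have "y + y^q \<in> ?K"
      by (simp add: frobenius_q power_q_q add.commute)
    ultimately show "w \<in> ?A" by auto
  qed
  have "?A = (\<Union>c\<in>artin_schreier ` ?K. {w. w^q + w = c})"
    by (auto simp: add.commute)
  hence "card ?A \<le> (\<Sum>c\<in>artin_schreier ` ?K. card {w::'a. w^q + w = c})"
    using card_UN_le[of "artin_schreier ` ?K" "\<lambda>c. {w. w^q + w = c}"] by simp
  also have "\<dots> \<le> (\<Sum>c\<in>artin_schreier ` ?K. q)"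
    using card_roots_trinomial[OF q_ge_two, of 1] by (intro sum_mono) simp
  finally have "2 * card ?A \<le> q * (2 * card (artin_schreier ` ?K))"
    by (simp add: mult.commute)
  also have "\<dots> = q * card ?K"
    by (simp add: card_fixed_artin_schreier)
  also have "\<dots> \<le> 2 * card (range (artin_schreier :: 'a \<Rightarrow> 'a))"
    using card_fixed_le card_range_artin_schreier by (simp add: power2_eq_square)
  finally have "?A = range artin_schreier"
    using sub by (intro card_seteq[symmetric]) auto
  thus ?thesis using assms by auto
qed

text \<open>Every u in GF(q)^* has at least q + 1 preimages under the norm x |-> x^(q+1): the
  norm maps the q^2 - 1 nonzero elements into GF(q)^*, which has at most q - 1 elements,
  and every fibre has at most q + 1 points.\<close>
lemma card_norm_fibre:
  assumes u: "(u::'a) \<noteq> 0" "u^q = u"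
  shows "q + 1 \<le> card {x::'a. x^(q+1) = u}"
proof -
  let ?F = "UNIV - {0::'a}"
  let ?K = "{v::'a. v^q = v} - {0}"
  let ?N = "\<lambda>x::'a. x^(q+1)"
  let ?g = "\<lambda>v::'a. card {x::'a. x^(q+1) = v}"
  have norm_in_K: "?N ` ?F \<subseteq> ?K"
  proof
    fix v assume "v \<in> ?N ` ?F"
    then obtain x where x: "x \<noteq> 0" "v = x^(q+1)" by auto
    have "v = x * x^q" using x by simp
    hence "v^q = x^q * (x^q)^q" by (simp add: power_mult_distrib)
    thus "v \<in> ?K" using x by (simp add: power_q_q)
  qed
  have uK: "u \<in> ?K" using u by simp
  have card_K: "card ?K \<le> q - 1"
    using card_fixed_le q_ge_two by (simp add: card_Diff_singleton)
  have fibre_le: "?g v \<le> q + 1" for v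
    using card_roots_trinomial[of "q+1" 0 v] q_ge_two by simp
  have "q^2 - 1 = card ?F"
    using card_UNIV by (simp add: card_Diff_singleton)
  also have "\<dots> = (\<Sum>v\<in>?N ` ?F. card {x\<in>?F. ?N x = v})"
    by (rule card_eq_sum_fibres) simp
  also have "\<dots> \<le> (\<Sum>v\<in>?N ` ?F. ?g v)"
    by (intro sum_mono card_mono) auto
  also have "\<dots> \<le> (\<Sum>v\<in>?K. ?g v)"
    using norm_in_K by (intro sum_mono2) auto
  also have "\<dots> = ?g u + (\<Sum>v\<in>?K - {u}. ?g v)"
    using uK by (simp add: sum.remove)
  also have "\<dots> \<le> ?g u + (card ?K - 1) * (q + 1)"
    using sum_mono[of "?K - {u}" ?g "\<lambda>_. q + 1"] fibre_le uK by (simp add: card_Diff_singleton)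
  also have "\<dots> \<le> ?g u + (q - 2) * (q + 1)"
    using card_K by (intro add_left_mono mult_right_mono) auto
  finally have "q^2 - 1 \<le> ?g u + (q - 2) * (q + 1)" .
  moreover obtain r where "q = r + 2"
    using q_ge_two by (metis add.commute le_Suc_ex)
  ultimately show ?thesis
    by (simp add: power2_eq_square algebra_simps)
qed

text \<open>Along the norm circle x^(q+1) = u one has x^q = u/x, so m(x)^q is again a Moebius
  function of x and the equation m(x) + m(x)^q = c for a Moebius map m becomes a quadratic
  equation in x.\<close>
lemma mobius_trace_eq_iff_quadratic:
  fixes \<alpha> \<beta> \<gamma> \<delta> u c :: 'a
  assumes u: "u \<noteq> 0" and poles: "\<And>x. x^(q+1) = u \<Longrightarrow> \<gamma>*x + \<delta> \<noteq> 0"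
  obtains A B C where "\<And>x. x^(q+1) = u \<Longrightarrow>
    mobius \<alpha> \<beta> \<gamma> \<delta> x + (mobius \<alpha> \<beta> \<gamma> \<delta> x)^q = c \<longleftrightarrow> A*x^2 + B*x + C = 0"
proof -
  let ?m = "mobius \<alpha> \<beta> \<gamma> \<delta>"
  define N where "N x = \<alpha>^q*u + \<beta>^q*x" for x
  define D where "D x = \<gamma>^q*u + \<delta>^q*x" for x
  have conj: "x \<noteq> 0" "x^q = u / x" if "x^(q+1) = u" for x
    using that u by (auto simp: field_simps mult.commute)
  have m_conj: "(?m x)^q = N x / D x" "D x \<noteq> 0" if x: "x^(q+1) = u" for x
  proof -
    have num: "(\<alpha>*x + \<beta>)^q = N x / x" and den: "(\<gamma>*x + \<delta>)^q = D x / x"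
      using conj[OF x] by (simp_all add: frobenius_q power_mult_distrib N_def D_def field_simps)
    show "D x \<noteq> 0"
      using den poles x by auto
    show "(?m x)^q = N x / D x"
      using num den conj[OF x] by (simp add: mobius_def power_divide)
  qed
  define A where "A = \<alpha>*\<delta>^q + \<beta>^q*\<gamma> - c*\<gamma>*\<delta>^q"
  define B where "B = \<alpha>*\<gamma>^q*u + \<beta>*\<delta>^q + \<alpha>^q*u*\<gamma> + \<beta>^q*\<delta> - c*(\<gamma>*\<gamma>^q*u + \<delta>*\<delta>^q)"
  define C where "C = \<beta>*\<gamma>^q*u + \<alpha>^q*u*\<delta> - c*\<delta>*\<gamma>^q*u"
  have "?m x + (?m x)^q = c \<longleftrightarrow> A*x^2 + B*x + C = 0" if x: "x^(q+1) = u" for x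
  proof -
    have "\<gamma>*x + \<delta> \<noteq> 0" using poles x by simp
    hence "?m x + (?m x)^q = c \<longleftrightarrow> (\<alpha>*x + \<beta>)*D x + N x*(\<gamma>*x + \<delta>) - c*(\<gamma>*x + \<delta>)*D x = 0"
      unfolding m_conj(1)[OF x] unfolding mobius_def
      by (rule sum_of_fractions_eq_iff[OF _ m_conj(2)[OF x]])
    also have "(\<alpha>*x + \<beta>)*D x + N x*(\<gamma>*x + \<delta>) - c*(\<gamma>*x + \<delta>)*D x = A*x^2 + B*x + C"
      by (simp add: A_def B_def C_def N_def D_def algebra_simps power2_eq_square)
    finally show ?thesis .
  qed
  thus ?thesis using that by blast
qed

text \<open>If the quadratic vanished identically, the injective map m would
  send the q + 1 points of the circle into the q solutions of w^q + w = c.\<close>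
lemma card_mobius_trace_fibre:
  fixes \<alpha> \<beta> \<gamma> \<delta> u c :: 'a
  assumes u: "u \<noteq> 0" "u^q = u" and nd: "\<alpha>*\<delta> + \<beta>*\<gamma> \<noteq> 0"
    and poles: "\<And>x. x^(q+1) = u \<Longrightarrow> \<gamma>*x + \<delta> \<noteq> 0"
  shows "card {x. x^(q+1) = u \<and> mobius \<alpha> \<beta> \<gamma> \<delta> x + (mobius \<alpha> \<beta> \<gamma> \<delta> x)^q = c} \<le> 2"
proof -
  let ?S = "{x::'a. x^(q+1) = u}"
  let ?m = "mobius \<alpha> \<beta> \<gamma> \<delta>"
  obtain A B C where fibre_iff:
    "\<And>x. x^(q+1) = u \<Longrightarrow> ?m x + (?m x)^q = c \<longleftrightarrow> A*x^2 + B*x + C = 0"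
    using mobius_trace_eq_iff_quadratic[OF u(1) poles] by blast
  show ?thesis
  proof (cases "A = 0 \<and> B = 0 \<and> C = 0")
    case False
    have "{x. x^(q+1) = u \<and> ?m x + (?m x)^q = c} \<subseteq> {x. A*x^2 + B*x + C = 0}"
      using fibre_iff by auto
    thus ?thesis
      using card_roots_quadratic[of A B C] False by (meson card_mono finite order_trans)
  next
    case True
    have "\<alpha>*\<delta> - \<beta>*\<gamma> = \<alpha>*\<delta> + \<beta>*\<gamma>"
      by (metis diff_conv_add_uminus minus_eq_self)
    hence "inj_on ?m ?S"
      using nd poles by (intro inj_on_mobius) auto
    hence "q + 1 \<le> card (?m ` ?S)"
      using card_norm_fibre[OF u] by (simp add: card_image)
    also have "\<dots> \<le> card {w::'a. w^q + w = c}"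
      using fibre_iff True by (intro card_mono) (auto simp: add.commute)
    also have "\<dots> \<le> q"
      using card_roots_trinomial[OF q_ge_two, of 1 c] by simp
    finally show ?thesis by simp
  qed
qed

text \<open>Main counting lemma: a nondegenerate Moebius map sends some point of the norm circle
  either to infinity or into the Artin-Schreier image.  Otherwise all its relative traces
  avoid the image on GF(q), a set of at most q/2 elements, and the two-to-one bound on the
  fibres would give at most q points on the circle.\<close>
lemma mobius_meets_artin_schreier:
  fixes \<alpha> \<beta> \<gamma> \<delta> u :: 'a
  assumes u: "u \<noteq> 0" "u^q = u" and nd: "\<alpha>*\<delta> + \<beta>*\<gamma> \<noteq> 0"
  shows "\<exists>x. x^(q+1) = u \<and> (\<gamma>*x + \<delta> = 0 \<or> mobius \<alpha> \<beta> \<gamma> \<delta> x \<in> range artin_schreier)"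
proof (rule ccontr)
  assume none: "\<not> ?thesis"
  let ?S = "{x::'a. x^(q+1) = u}"
  let ?K = "{z::'a. z^q = z}"
  let ?m = "mobius \<alpha> \<beta> \<gamma> \<delta>"
  let ?v = "\<lambda>x. ?m x + (?m x)^q"
  have trace_image: "?v ` ?S \<subseteq> ?K - artin_schreier ` ?K"
  proof
    fix w assume "w \<in> ?v ` ?S"
    then obtain x where x: "x \<in> ?S" and w: "w = ?v x" by blast
    have "w^q = w"
      by (simp add: w frobenius_q power_q_q add.commute)
    moreover have "?m x \<notin> range artin_schreier"
      using none x by blast
    hence "w \<notin> artin_schreier ` ?K"
      unfolding w using rel_trace_artin_schreier[of "?m x"] by (rule contrapos_nn)
    ultimately show "w \<in> ?K - artin_schreier ` ?K" by simp
  qed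
  have "card ?S \<le> 2 * card (?v ` ?S)"
    using card_mobius_trace_fibre[OF u nd] none by (intro card_le_mult_card_image) auto
  also have "\<dots> \<le> 2 * card (?K - artin_schreier ` ?K)"
    using trace_image by (intro mult_left_mono card_mono) auto
  also have "\<dots> \<le> q"
    by (rule card_fixed_not_artin_schreier)
  finally show False
    using card_norm_fibre[OF u] by simp
qed

lemma monic_conic_meets_norm_fibre:
  fixes a c d e f u :: 'a
  assumes u: "u \<noteq> 0" "u^q = u" and nd: "a*f^2 + e^2 + c*d^2 + d*e*f \<noteq> 0"
  shows "\<exists>x y. x^(q+1) = u \<and> y^2 + (d*x + f)*y + (a*x^2 + e*x + c) = 0"
proof (cases "d = 0 \<and> f = 0")
  case True
  have "card {x::'a. x^(q+1) = u} \<noteq> 0"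
    using card_norm_fibre[OF u] by linarith
  hence "{x::'a. x^(q+1) = u} \<noteq> {}"
    by auto
  then obtain x where "x^(q+1) = u" by blast
  thus ?thesis
    using quadratic_solvable[of "d*x + f"] True by auto
next
  case False
  then obtain \<alpha> \<beta> where nd': "\<alpha>*f + \<beta>*d \<noteq> 0" and reduce:
      "\<And>x. d*x + f \<noteq> 0 \<Longrightarrow>
        \<exists>t. (a*x^2 + e*x + c) / (d*x + f)^2 = mobius \<alpha> \<beta> d f x + artin_schreier t"
    using conic_to_mobius_vertical[OF nd] conic_to_mobius_general[OF nd] by (cases "d = 0") blast+
  obtain x where x: "x^(q+1) = u"
    and hit: "d*x + f = 0 \<or> mobius \<alpha> \<beta> d f x \<in> range artin_schreier"
    using mobius_meets_artin_schreier[OF u nd'] by blast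
  have "d*x + f = 0 \<or> (a*x^2 + e*x + c) / (d*x + f)^2 \<in> range artin_schreier"
  proof (cases "d*x + f = 0")
    case False
    then obtain z t where "mobius \<alpha> \<beta> d f x = artin_schreier z"
      and "(a*x^2 + e*x + c) / (d*x + f)^2 = mobius \<alpha> \<beta> d f x + artin_schreier t"
      using hit reduce by blast
    hence "(a*x^2 + e*x + c) / (d*x + f)^2 = artin_schreier (z + t)"
      by (simp add: artin_schreier_add)
    thus ?thesis by blast
  qed simp
  thus ?thesis
    using quadratic_solvable x by blast
qed

text \<open>The same for a conic with nonzero coefficient b of Y^2, after the substitution
  Y = b y.\<close>
lemma conic_meets_norm_fibre:
  fixes a b c d e f u :: 'a
  assumes u: "u \<noteq> 0" "u^q = u" and b: "b \<noteq> 0"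
    and nd: "a*f^2 + b*e^2 + c*d^2 + d*e*f \<noteq> 0"
  shows "\<exists>x y. x^(q+1) = u \<and> conic_form (a, b, c, d, e, f) (x, y, 1) = 0"
proof -
  have "(a*b)*f^2 + (e*b)^2 + (c*b)*d^2 + d*(e*b)*f = b * (a*f^2 + b*e^2 + c*d^2 + d*e*f)"
    by (simp add: algebra_simps power2_eq_square)
  hence "(a*b)*f^2 + (e*b)^2 + (c*b)*d^2 + d*(e*b)*f \<noteq> 0"
    using nd b by simp
  then obtain x Y where x: "x^(q+1) = u"
    and Y: "Y^2 + (d*x + f)*Y + ((a*b)*x^2 + (e*b)*x + c*b) = 0"
    using monic_conic_meets_norm_fibre[OF u] by blast
  have "conic_form (a, b, c, d, e, f) (x, Y/b, 1) = (Y^2 + (d*x + f)*Y + ((a*b)*x^2 + (e*b)*x + c*b)) / b"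
    using b by (simp add: field_simps power2_eq_square)
  also have "\<dots> = 0"
    using Y by simp
  finally show ?thesis
    using x by blast
qed

end

end

text \<open>Main theorem: every non-degenerate conic of PG(2,q^2) meets
  Psi' = {(x:y:1) : x^(q+1) in U} together with Y_infinity.  The argument only needs h >= 1.\<close>
theorem mainTheorem5:
  fixes h q :: nat and U :: "'a::{field,finite} set"
  assumes "h > 1" and "q = 2 ^ h" and "card (UNIV :: 'a set) = q ^ 2"
    and "U \<noteq> {}" and "U \<subseteq> subfield_star q"
  shows "\<forall>C :: 'a conic. conic_nondeg C \<longrightarrow> (\<exists>p \<in> Psi' q U. on_conic C p)"
proof (intro allI impI)
  fix C :: "'a conic"
  assume nondeg: "conic_nondeg C"
  obtain a b c d e f where C: "C = (a, b, c, d, e, f)"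
    by (cases C) auto
  have "card (UNIV :: 'a set) = 2 ^ (2*h)"
    using assms(2,3) by (simp add: power_mult[symmetric] mult.commute)
  hence char_two: "CHAR('a) = 2"
    by (rule CHAR_eq_two)
  obtain u where u: "u \<in> U" "u \<noteq> 0" "u^q = u"
    using assms(4,5) unfolding subfield_star_def by blast
  show "\<exists>p \<in> Psi' q U. on_conic C p"
  proof (cases "b = 0")
    case True
    hence "on_conic C (0, 1, 0)"
      by (simp add: C on_conic_def)
    thus ?thesis by (auto simp: Psi'_def)
  next
    case False
    have "a*f^2 + b*e^2 + c*d^2 + d*e*f \<noteq> 0"
      using conic_nondeg_char_two[OF char_two] nondeg C by simp
    then obtain x y where "x^(q+1) = u" and "conic_form C (x, y, 1) = 0"
      using conic_meets_norm_fibre[OF char_two assms(3,2) u(2,3) False] C by blast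
    thus ?thesis
      using u(1) by (auto simp: on_conic_def Psi'_def gnorm_def)
  qed
qed

end
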